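(* Let $\Gamma$ be a simple graph on a finite set $X$ with $|X|\ge3$. If for some point $x\in X$ the graph $\Gamma^x$ is extensible, then for every $y\in X$ the graph $\Gamma^y$ is extensible, and the parameters of $\Gamma^x$ and $\Gamma^y$ are equal.
   Context: A finite simple graph $(\Lambda,Y)$ is extensible with parameters $(t,s,\bar s)$ (nonnegative integers) if: (1) $\Lambda$ has diameter $2$; (2) for every $y\in Y$, with $\Lambda(y,d)$ the set of vertices at distance $d$ from $y$: (a) $|\Lambda(y,1)|=2s$; (b) $|\Lambda(y,2)|=2\bar s$; (c) every $z\in\Lambda(y,1)$ is adjacent to exactly $\bar s$ points of $\Lambda(y,2)$ and exactly $t=2s-\bar s-1$ points of $\Lambda(y,1)$; (d) every $z\in\Lambda(y,2)$ is adjacent to exactly $s$ points of $\Lambda(y,2)$ and exactly $s$ points of $\Lambda(y,1)$; (3) every edge lies in exactly $t$ triangles; (4) $|Y|=1+2s+2\bar s$. The matrix of a graph on $X$ has entry $-1$ at $(i,j)$ if $i\ne j$ are adjacent and $1$ otherwise; two graphs with matrices $\mathcal{E},\mathcal{E}'$ are associated if $\varepsilon'_{i,j}=\nu_i\nu_j\varepsilon_{i,j}$ for some $\nu_i\in\{\pm1\}$. ${}^x\Gamma$ is the unique graph associated to $\Gamma$ in which $x$ is isolated, and $\Gamma^x$ is the graph induced by ${}^x\Gamma$ on $X\setminus\{x\}$. *)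

theory Defs
  imports Main
begin

definition graph_on :: "'a set \<Rightarrow> ('a \<Rightarrow> 'a \<Rightarrow> bool) \<Rightarrow> bool" where
  "graph_on X E \<longleftrightarrow> (\<forall>u v. E u v \<longrightarrow> u \<in> X \<and> v \<in> X \<and> u \<noteq> v) \<and> (\<forall>u v. E u v \<longrightarrow> E v u)"

definition gmat :: "('a \<Rightarrow> 'a \<Rightarrow> bool) \<Rightarrow> 'a \<Rightarrow> 'a \<Rightarrow> int" where
  "gmat E i j = (if i \<noteq> j \<and> E i j then -1 else 1)"

definition associated :: "'a set \<Rightarrow> ('a \<Rightarrow> 'a \<Rightarrow> bool) \<Rightarrow> ('a \<Rightarrow> 'a \<Rightarrow> bool) \<Rightarrow> bool" where
  "associated X E E' \<longleftrightarrow> (\<exists>\<nu> :: 'a \<Rightarrow> int. (\<forall>i\<in>X. \<nu> i = 1 \<or> \<nu> i = -1) \<and>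
      (\<forall>i\<in>X. \<forall>j\<in>X. gmat E' i j = \<nu> i * \<nu> j * gmat E i j))"

text \<open>${}^x\Gamma$: the unique graph on X associated to E in which x is isolated.\<close>
definition iso_switch :: "'a set \<Rightarrow> ('a \<Rightarrow> 'a \<Rightarrow> bool) \<Rightarrow> 'a \<Rightarrow> ('a \<Rightarrow> 'a \<Rightarrow> bool)" where
  "iso_switch X E x = (THE E'. graph_on X E' \<and> associated X E E' \<and> (\<forall>v. \<not> E' x v))"

definition derived :: "'a set \<Rightarrow> ('a \<Rightarrow> 'a \<Rightarrow> bool) \<Rightarrow> 'a \<Rightarrow> ('a \<Rightarrow> 'a \<Rightarrow> bool)" where
  "derived X E x = (\<lambda>u v. u \<in> X - {x} \<and> v \<in> X - {x} \<and> iso_switch X E x u v)"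

definition dist1 :: "'a set \<Rightarrow> ('a \<Rightarrow> 'a \<Rightarrow> bool) \<Rightarrow> 'a \<Rightarrow> 'a set" where
  "dist1 Y L y = {z \<in> Y. z \<noteq> y \<and> L y z}"

definition dist2 :: "'a set \<Rightarrow> ('a \<Rightarrow> 'a \<Rightarrow> bool) \<Rightarrow> 'a \<Rightarrow> 'a set" where
  "dist2 Y L y = {z \<in> Y. z \<noteq> y \<and> \<not> L y z \<and> (\<exists>w\<in>Y. L y w \<and> L w z)}"

definition diameter2 :: "'a set \<Rightarrow> ('a \<Rightarrow> 'a \<Rightarrow> bool) \<Rightarrow> bool" where
  "diameter2 Y L \<longleftrightarrow> (\<forall>y\<in>Y. \<forall>z\<in>Y. y = z \<or> z \<in> dist1 Y L y \<or> z \<in> dist2 Y L y)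
                     \<and> (\<exists>y\<in>Y. \<exists>z\<in>Y. z \<in> dist2 Y L y)"

definition extensible :: "'a set \<Rightarrow> ('a \<Rightarrow> 'a \<Rightarrow> bool) \<Rightarrow> nat \<Rightarrow> nat \<Rightarrow> nat \<Rightarrow> bool" where
  "extensible Y L t s sb \<longleftrightarrow>
     finite Y \<and> graph_on Y L \<and>
     int t = 2 * int s - int sb - 1 \<and>
     diameter2 Y L \<and>
     (\<forall>y\<in>Y.
        card (dist1 Y L y) = 2 * s \<and>
        card (dist2 Y L y) = 2 * sb \<and>
        (\<forall>z\<in>dist1 Y L y. card {w \<in> dist2 Y L y. L z w} = sb \<and>
                          card {w \<in> dist1 Y L y. L z w} = t) \<and>
        (\<forall>z\<in>dist2 Y L y. card {w \<in> dist2 Y L y. L z w} = s \<and>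
                          card {w \<in> dist1 Y L y. L z w} = s)) \<and>
     (\<forall>u\<in>Y. \<forall>v\<in>Y. L u v \<longrightarrow> card {w \<in> Y. L u w \<and> L v w} = t) \<and>
     card Y = 1 + 2 * s + 2 * sb"

end

(* Switching a graph does not change the parity of the number of edges spanned by a triple of
   vertices, so every \<Gamma>^y has the same odd triples as \<Gamma>. For a graph A on V extended by an
   isolated vertex, the number of odd triples through a pair of vertices is a linear expression in
   degrees and common-neighbour counts; hence every pair lies in exactly 2s odd triples iff A is
   strongly regular with parameters (2s, t, s) and |V| + 1 + 2t = 6s. Extensibility with parameters
   (t, s, sb) is exactly strong regularity with parameters (2s, t, s) on 1 + 2s + 2sb vertices with
   t = 2s - sb - 1 and sb >= 1. So the regularity of the odd triples, read off at x, transfers to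
   every y. *)

theory Submission imports Defs begin

definition odd_triple :: "('a \<Rightarrow> 'a \<Rightarrow> bool) \<Rightarrow> 'a \<Rightarrow> 'a \<Rightarrow> 'a \<Rightarrow> bool" where
  "odd_triple E a b c \<longleftrightarrow> (E a b \<noteq> E b c) \<noteq> E a c"

lemma odd_triple_iff_gmat:
  assumes "a \<noteq> b" "b \<noteq> c" "a \<noteq> c"
  shows "odd_triple E a b c \<longleftrightarrow> gmat E a b * gmat E b c * gmat E a c = -1"
  using assms by (simp add: odd_triple_def gmat_def)

lemma associated_odd_triple:
  assumes "associated X E G" and "a \<in> X" "b \<in> X" "c \<in> X" and "a \<noteq> b" "b \<noteq> c" "a \<noteq> c"
  shows "odd_triple G a b c \<longleftrightarrow> odd_triple E a b c"
proof -
  obtain \<nu> :: "'a \<Rightarrow> int" where sign: "\<forall>i\<in>X. \<nu> i = 1 \<or> \<nu> i = -1"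
    and switch: "\<forall>i\<in>X. \<forall>j\<in>X. gmat G i j = \<nu> i * \<nu> j * gmat E i j"
    using assms(1) unfolding associated_def by blast
  have "\<nu> a * \<nu> a = 1" "\<nu> b * \<nu> b = 1" "\<nu> c * \<nu> c = 1"
    using sign assms(2-4) by auto
  then have "gmat G a b * gmat G b c * gmat G a c = gmat E a b * gmat E b c * gmat E a c"
    using switch assms(2-4) by (simp add: algebra_simps)
  then show ?thesis using assms(5-7) by (simp add: odd_triple_iff_gmat)
qed

lemma associated_isolating_switch:
  assumes "graph_on X E" and "y \<in> X"
  shows "associated X E (\<lambda>u v. u \<in> X \<and> v \<in> X \<and> u \<noteq> v \<and> u \<noteq> y \<and> v \<noteq> y \<and> odd_triple E y u v)"
    (is "associated X E ?F")
  unfolding associated_def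
proof (intro exI[of _ "gmat E y"] conjI ballI)
  fix i j assume "i \<in> X" "j \<in> X"
  moreover have "E u v = E v u" "\<not> E u u" for u v
    using assms(1) unfolding graph_on_def by blast+
  ultimately show "gmat ?F i j = gmat E y i * gmat E y j * gmat E i j"
    by (auto simp: gmat_def odd_triple_def)
qed (simp add: gmat_def)

lemma associated_isolated_unique:
  assumes "graph_on X G" "associated X E G" "\<And>v. \<not> G y v"
    and "graph_on X G'" "associated X E G'" "\<And>v. \<not> G' y v"
    and "y \<in> X"
  shows "G = G'"
proof (intro ext)
  fix u v
  have isolated_eq: "H u v \<longleftrightarrow> u \<in> X \<and> v \<in> X \<and> u \<noteq> v \<and> u \<noteq> y \<and> v \<noteq> y \<and> odd_triple H y u v"
    if "graph_on X H" "\<And>v. \<not> H y v" for H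
    using that unfolding graph_on_def odd_triple_def by blast
  show "G u v = G' u v"
    unfolding isolated_eq[OF assms(1,3)] isolated_eq[OF assms(4,6)]
    using associated_odd_triple[OF assms(2) \<open>y \<in> X\<close>] associated_odd_triple[OF assms(5) \<open>y \<in> X\<close>]
    by blast
qed

lemma iso_switch_spec:
  assumes "graph_on X E" and "y \<in> X"
  shows "graph_on X (iso_switch X E y)" "associated X E (iso_switch X E y)"
    "\<And>v. \<not> iso_switch X E y y v"
proof -
  let ?F = "\<lambda>u v. u \<in> X \<and> v \<in> X \<and> u \<noteq> v \<and> u \<noteq> y \<and> v \<noteq> y \<and> odd_triple E y u v"
  have "E u v = E v u" for u v
    using assms(1) unfolding graph_on_def by blast
  then have "graph_on X ?F"
    unfolding graph_on_def odd_triple_def by auto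
  then have "\<exists>!G. graph_on X G \<and> associated X E G \<and> (\<forall>v. \<not> G y v)"
    using associated_isolating_switch[OF assms] associated_isolated_unique[OF _ _ _ _ _ _ assms(2)]
    by (intro ex1I[of _ ?F]) auto
  from theI'[OF this] show "graph_on X (iso_switch X E y)" "associated X E (iso_switch X E y)"
    "\<And>v. \<not> iso_switch X E y y v"
    unfolding iso_switch_def by blast+
qed

lemma derived_eq_iso_switch:
  assumes "graph_on X E" and "y \<in> X"
  shows "derived X E y = iso_switch X E y"
  using iso_switch_spec[OF assms] unfolding derived_def graph_on_def by blast

lemma graph_on_derived:
  assumes "graph_on X E" and "y \<in> X"
  shows "graph_on (X - {y}) (derived X E y)"
  using iso_switch_spec[OF assms] unfolding derived_eq_iso_switch[OF assms] graph_on_def by blast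

definition odd_count :: "'a set \<Rightarrow> ('a \<Rightarrow> 'a \<Rightarrow> bool) \<Rightarrow> 'a \<Rightarrow> 'a \<Rightarrow> nat" where
  "odd_count X E a b = card {c \<in> X - {a, b}. odd_triple E a b c}"

lemma odd_count_derived:
  assumes "graph_on X E" "y \<in> X" and "a \<in> X" "b \<in> X" "a \<noteq> b"
  shows "odd_count X (derived X E y) a b = odd_count X E a b"
  unfolding odd_count_def derived_eq_iso_switch[OF assms(1,2)]
  using associated_odd_triple[OF iso_switch_spec(2)[OF assms(1,2)] assms(3,4)] assms(5)
  by (intro arg_cong[where f = card]) auto

definition regular_two_graph :: "'a set \<Rightarrow> ('a \<Rightarrow> 'a \<Rightarrow> bool) \<Rightarrow> nat \<Rightarrow> bool" where
  "regular_two_graph X E n \<longleftrightarrow> (\<forall>a\<in>X. \<forall>b\<in>X. a \<noteq> b \<longrightarrow> odd_count X E a b = n)"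

lemma regular_two_graph_derived_iff:
  assumes "graph_on X E" and "y \<in> X"
  shows "regular_two_graph X (derived X E y) n \<longleftrightarrow> regular_two_graph X E n"
  unfolding regular_two_graph_def using odd_count_derived[OF assms] by simp

lemma odd_count_commute:
  assumes "E a b = E b a"
  shows "odd_count X E a b = odd_count X E b a"
  using assms unfolding odd_count_def odd_triple_def by (metis insert_commute)

lemma odd_count_isolated:
  assumes "graph_on V A" and "y \<notin> V" and "u \<in> V"
  shows "odd_count (insert y V) A y u = card (dist1 V A u)"
proof -
  have "{c \<in> insert y V - {y, u}. odd_triple A y u c} = dist1 V A u"
    using assms unfolding graph_on_def odd_triple_def dist1_def by auto
  then show ?thesis
    unfolding odd_count_def by simp
qed

lemma odd_count_nonadjacent:
  assumes "finite V" "graph_on V A" and "y \<notin> V" and "\<not> A u w"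
  shows "odd_count (insert y V) A u w + 2 * card (dist1 V A u \<inter> dist1 V A w)
    = card (dist1 V A u) + card (dist1 V A w)"
proof -
  let ?N = "dist1 V A u" and ?M = "dist1 V A w"
  have fin: "finite ?N" "finite ?M"
    using assms(1) unfolding dist1_def by simp_all
  have "{c \<in> insert y V - {u, w}. odd_triple A u w c} = (?N - ?M) \<union> (?M - ?N)"
    using assms(2-4) unfolding graph_on_def odd_triple_def dist1_def by auto
  moreover have "card ((?N - ?M) \<union> (?M - ?N)) = card (?N - ?M) + card (?M - ?N)"
    using fin by (intro card_Un_disjoint) auto
  ultimately have "odd_count (insert y V) A u w = card (?N - ?M) + card (?M - ?N)"
    unfolding odd_count_def by simp
  then show ?thesis
    using card_Int_Diff[OF fin(1), of ?M] card_Int_Diff[OF fin(2), of ?N] by (simp add: Int_commute)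
qed

lemma odd_count_adjacent:
  assumes "finite V" "graph_on V A" and "y \<notin> V" and "A u w"
  shows "odd_count (insert y V) A u w + card (dist1 V A u) + card (dist1 V A w)
    = card V + 1 + 2 * card (dist1 V A u \<inter> dist1 V A w)"
proof -
  let ?N = "dist1 V A u" and ?M = "dist1 V A w"
  have sub: "?N \<union> ?M \<subseteq> V"
    unfolding dist1_def by auto
  have fin: "finite ?N" "finite ?M"
    using assms(1) unfolding dist1_def by simp_all
  have "{c \<in> insert y V - {u, w}. odd_triple A u w c} = insert y ((V - (?N \<union> ?M)) \<union> (?N \<inter> ?M))"
    using assms(2-4) unfolding graph_on_def odd_triple_def dist1_def by auto
  moreover have "y \<notin> (V - (?N \<union> ?M)) \<union> (?N \<inter> ?M)"
    using assms(3) unfolding dist1_def by auto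
  moreover have "card ((V - (?N \<union> ?M)) \<union> (?N \<inter> ?M)) = card (V - (?N \<union> ?M)) + card (?N \<inter> ?M)"
    using assms(1) fin by (intro card_Un_disjoint) auto
  ultimately have "odd_count (insert y V) A u w = 1 + (card V - card (?N \<union> ?M)) + card (?N \<inter> ?M)"
    unfolding odd_count_def using assms(1) sub fin by (simp add: card_Diff_subset)
  moreover have "card (?N \<union> ?M) \<le> card V"
    using assms(1) sub by (rule card_mono)
  ultimately show ?thesis
    using card_Un_Int[OF fin] by linarith
qed

definition strongly_regular :: "'a set \<Rightarrow> ('a \<Rightarrow> 'a \<Rightarrow> bool) \<Rightarrow> nat \<Rightarrow> nat \<Rightarrow> nat \<Rightarrow> bool" where
  "strongly_regular V A k lam mu \<longleftrightarrow> finite V \<and> graph_on V A \<and> (\<forall>u\<in>V. card (dist1 V A u) = k) \<and>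
     (\<forall>u\<in>V. \<forall>w\<in>V. u \<noteq> w \<longrightarrow> card (dist1 V A u \<inter> dist1 V A w) = (if A u w then lam else mu))"

lemma regular_two_graph_insert_if_strongly_regular:
  assumes "strongly_regular V A (2 * s) t s" and "card V + 1 + 2 * t = 6 * s" and "y \<notin> V"
  shows "regular_two_graph (insert y V) A (2 * s)"
  unfolding regular_two_graph_def
proof (intro ballI impI)
  have V: "finite V" "graph_on V A" "\<forall>u\<in>V. card (dist1 V A u) = 2 * s"
    "\<forall>u\<in>V. \<forall>w\<in>V. u \<noteq> w \<longrightarrow> card (dist1 V A u \<inter> dist1 V A w) = (if A u w then t else s)"
    using assms(1) unfolding strongly_regular_def by blast+
  fix a b assume a: "a \<in> insert y V" and b: "b \<in> insert y V" and "a \<noteq> b"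
  consider "a = y" | "b = y" | "a \<in> V" "b \<in> V"
    using a b by blast
  then show "odd_count (insert y V) A a b = 2 * s"
  proof cases
    case 1
    then show ?thesis using odd_count_isolated[OF V(2) assms(3)] V(3) \<open>a \<noteq> b\<close> b by auto
  next
    case 2
    have "A a b = A b a"
      using V(2) unfolding graph_on_def by blast
    then show ?thesis
      using odd_count_isolated[OF V(2) assms(3)] odd_count_commute[of A a b] V(3) 2 \<open>a \<noteq> b\<close> a by auto
  next
    case 3
    then have "card (dist1 V A a) = 2 * s" "card (dist1 V A b) = 2 * s"
      "card (dist1 V A a \<inter> dist1 V A b) = (if A a b then t else s)"
      using V(3,4) \<open>a \<noteq> b\<close> by auto
    then show ?thesis
      using odd_count_adjacent[OF V(1,2) assms(3), of a b] odd_count_nonadjacent[OF V(1,2) assms(3), of a b]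
        assms(2) by (cases "A a b") auto
  qed
qed

lemma strongly_regular_if_regular_two_graph_insert:
  assumes "finite V" "graph_on V A" and "y \<notin> V" and "card V + 1 + 2 * t = 6 * s"
    and "regular_two_graph (insert y V) A (2 * s)"
  shows "strongly_regular V A (2 * s) t s"
proof -
  have regular: "odd_count (insert y V) A a b = 2 * s"
    if "a \<in> insert y V" "b \<in> insert y V" "a \<noteq> b" for a b
    using assms(5) that unfolding regular_two_graph_def by blast
  have degree: "card (dist1 V A u) = 2 * s" if "u \<in> V" for u
    using regular[of y u] odd_count_isolated[OF assms(2,3) that] that assms(3) by auto
  have "card (dist1 V A u \<inter> dist1 V A w) = (if A u w then t else s)"
    if "u \<in> V" "w \<in> V" "u \<noteq> w" for u w
    using regular[of u w] degree[of u] degree[of w] that assms(4)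
      odd_count_adjacent[OF assms(1-3), of u w] odd_count_nonadjacent[OF assms(1-3), of u w]
    by (cases "A u w") auto
  then show ?thesis
    unfolding strongly_regular_def using assms(1,2) degree by blast
qed

lemma dist1_eq:
  assumes "graph_on V A"
  shows "dist1 V A u = {z \<in> V. A u z}"
  using assms unfolding graph_on_def dist1_def by blast

lemma dist2_strongly_regular:
  assumes "strongly_regular V A k lam mu" and "1 \<le> mu" and "y \<in> V"
  shows "dist2 V A y = V - insert y (dist1 V A y)"
proof
  show "dist2 V A y \<subseteq> V - insert y (dist1 V A y)"
    unfolding dist1_def dist2_def by auto
next
  show "V - insert y (dist1 V A y) \<subseteq> dist2 V A y"
  proof
    fix z assume z: "z \<in> V - insert y (dist1 V A y)"
    then have "card (dist1 V A y \<inter> dist1 V A z) = mu"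
      using assms(1,3) unfolding strongly_regular_def dist1_def by auto
    then obtain w where "w \<in> dist1 V A y" "w \<in> dist1 V A z"
      using assms(2) by (metis card.empty disjoint_iff not_one_le_zero)
    moreover have "A w z = A z w"
      using assms(1) unfolding strongly_regular_def graph_on_def by blast
    ultimately show "z \<in> dist2 V A y"
      using z unfolding dist1_def dist2_def by auto
  qed
qed

lemma strongly_regular_dist_counts:
  assumes srg: "strongly_regular V A k lam mu" and "1 \<le> mu" and y: "y \<in> V"
  shows "card (dist2 V A y) = card V - 1 - k"
    and "z \<in> dist1 V A y \<Longrightarrow> card {w \<in> dist2 V A y. A z w} = k - lam - 1"
    and "z \<in> dist1 V A y \<Longrightarrow> card {w \<in> dist1 V A y. A z w} = lam"
    and "z \<in> dist2 V A y \<Longrightarrow> card {w \<in> dist2 V A y. A z w} = k - mu"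
    and "z \<in> dist2 V A y \<Longrightarrow> card {w \<in> dist1 V A y. A z w} = mu"
proof -
  have fin: "finite V" and g: "graph_on V A" and degree: "\<And>u. u \<in> V \<Longrightarrow> card (dist1 V A u) = k"
    and common: "\<And>u w. u \<in> V \<Longrightarrow> w \<in> V \<Longrightarrow> u \<noteq> w \<Longrightarrow>
      card (dist1 V A u \<inter> dist1 V A w) = (if A u w then lam else mu)"
    using srg unfolding strongly_regular_def by blast+
  have sym: "A u w = A w u" for u w
    using g unfolding graph_on_def by blast
  have dist2: "dist2 V A y = V - insert y (dist1 V A y)"
    using dist2_strongly_regular[OF assms] .
  have fin1: "finite (dist1 V A u)" for u
    using fin unfolding dist1_def by simp
  have neighbours: "{w \<in> dist1 V A y. A z w} = dist1 V A y \<inter> dist1 V A z" for z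
    unfolding dist1_eq[OF g] using g unfolding graph_on_def by blast
  have "card (insert y (dist1 V A y)) = 1 + k"
    using degree[OF y] fin1 unfolding dist1_def by simp
  then show "card (dist2 V A y) = card V - 1 - k"
    unfolding dist2 using fin y by (subst card_Diff_subset) (auto simp: dist1_def finite_subset)
  show "card {w \<in> dist1 V A y. A z w} = lam" if "z \<in> dist1 V A y"
    using common[OF y, of z] that neighbours[of z] unfolding dist1_def by auto
  show "card {w \<in> dist1 V A y. A z w} = mu" if "z \<in> dist2 V A y"
    using common[OF y, of z] that neighbours[of z] unfolding dist2_def by auto
  show "card {w \<in> dist2 V A y. A z w} = k - lam - 1" if z: "z \<in> dist1 V A y"
  proof -
    have "{w \<in> dist2 V A y. A z w} = dist1 V A z - insert y (dist1 V A y \<inter> dist1 V A z)"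
      unfolding dist2 dist1_eq[OF g] using sym by blast
    moreover have "insert y (dist1 V A y \<inter> dist1 V A z) \<subseteq> dist1 V A z"
      using y z sym unfolding dist1_def by auto
    moreover have "card (insert y (dist1 V A y \<inter> dist1 V A z)) = lam + 1"
      using common[OF y, of z] z fin1 unfolding dist1_def by auto
    ultimately show ?thesis
      using degree[of z] z fin1 by (simp add: card_Diff_subset finite_subset dist1_def)
  qed
  show "card {w \<in> dist2 V A y. A z w} = k - mu" if z: "z \<in> dist2 V A y"
  proof -
    have "{w \<in> dist2 V A y. A z w} = dist1 V A z - dist1 V A y"
      using z unfolding dist2 dist1_eq[OF g] using sym by blast
    moreover have "card (dist1 V A z \<inter> dist1 V A y) = mu" and "z \<in> V"
      using common[OF y, of z] z unfolding dist2_def by (auto simp: Int_commute)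
    ultimately show ?thesis
      using degree[of z] fin1 by (simp add: card_Diff_subset_Int)
  qed
qed

lemma extensible_if_strongly_regular:
  assumes srg: "strongly_regular V A (2 * s) t s" and card: "card V = 1 + 2 * s + 2 * sb"
    and t: "int t = 2 * int s - int sb - 1" and sb: "1 \<le> sb"
  shows "extensible V A t s sb"
proof -
  have fin: "finite V" and g: "graph_on V A" and degree: "\<forall>u\<in>V. card (dist1 V A u) = 2 * s"
    and common: "\<forall>u\<in>V. \<forall>w\<in>V. u \<noteq> w \<longrightarrow> card (dist1 V A u \<inter> dist1 V A w) = (if A u w then t else s)"
    using srg unfolding strongly_regular_def by blast+
  have s: "1 \<le> s"
    using t sb by linarith
  note counts = strongly_regular_dist_counts[OF srg s]
  have local: "card (dist1 V A y) = 2 * s \<and> card (dist2 V A y) = 2 * sb \<and>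
      (\<forall>z\<in>dist1 V A y. card {w \<in> dist2 V A y. A z w} = sb \<and> card {w \<in> dist1 V A y. A z w} = t) \<and>
      (\<forall>z\<in>dist2 V A y. card {w \<in> dist2 V A y. A z w} = s \<and> card {w \<in> dist1 V A y. A z w} = s)"
    if "y \<in> V" for y
    using degree counts[OF that] card t that by auto
  have "y = z \<or> z \<in> dist1 V A y \<or> z \<in> dist2 V A y" if "y \<in> V" "z \<in> V" for y z
    using dist2_strongly_regular[OF srg s that(1)] that by blast
  moreover obtain y where "y \<in> V"
    using card by fastforce
  moreover have "dist2 V A y \<noteq> {}" if "y \<in> V" for y
    using local[OF that] sb by fastforce
  ultimately have "diameter2 V A"
    unfolding diameter2_def dist2_def by blast
  moreover have "card {w \<in> V. A u w \<and> A v w} = t" if "A u v" for u v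
  proof -
    have "{w \<in> V. A u w \<and> A v w} = dist1 V A u \<inter> dist1 V A v"
      unfolding dist1_eq[OF g] by blast
    then show ?thesis
      using common that g unfolding graph_on_def by auto
  qed
  ultimately show ?thesis
    unfolding extensible_def using fin g t local card by blast
qed

lemma strongly_regular_if_extensible:
  assumes "extensible V A t s sb"
  shows "strongly_regular V A (2 * s) t s" and "1 \<le> sb"
proof -
  have fin: "finite V" and g: "graph_on V A" and diam: "diameter2 V A"
    and local: "\<forall>y\<in>V. card (dist1 V A y) = 2 * s \<and> card (dist2 V A y) = 2 * sb \<and>
      (\<forall>z\<in>dist2 V A y. card {w \<in> dist1 V A y. A z w} = s)"
    and triangles: "\<forall>u\<in>V. \<forall>v\<in>V. A u v \<longrightarrow> card {w \<in> V. A u w \<and> A v w} = t"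
    using assms unfolding extensible_def by blast+
  obtain y z where "y \<in> V" "z \<in> dist2 V A y"
    using diam unfolding diameter2_def by blast
  moreover have "finite (dist2 V A y)"
    using fin unfolding dist2_def by simp
  ultimately have "card (dist2 V A y) \<noteq> 0"
    by auto
  then show "1 \<le> sb"
    using local \<open>y \<in> V\<close> by auto
  have "card (dist1 V A u \<inter> dist1 V A w) = (if A u w then t else s)"
    if "u \<in> V" "w \<in> V" "u \<noteq> w" for u w
  proof (cases "A u w")
    case True
    have "{c \<in> V. A u c \<and> A w c} = dist1 V A u \<inter> dist1 V A w"
      unfolding dist1_eq[OF g] by blast
    moreover have "card {c \<in> V. A u c \<and> A w c} = t"
      using triangles that True by blast
    ultimately show ?thesis
      using True by simp
  next
    case False
    then have "w \<in> dist2 V A u"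
      using diam that unfolding diameter2_def dist1_def by blast
    then have "card {c \<in> dist1 V A u. A w c} = s"
      using local that by blast
    moreover have "{c \<in> dist1 V A u. A w c} = dist1 V A u \<inter> dist1 V A w"
      unfolding dist1_eq[OF g] by blast
    ultimately show ?thesis
      using False by simp
  qed
  then show "strongly_regular V A (2 * s) t s"
    unfolding strongly_regular_def using fin g local by blast
qed

theorem proposition5:
  fixes X :: "'a set" and E :: "'a \<Rightarrow> 'a \<Rightarrow> bool" and x :: 'a
    and t s sb :: nat
  assumes "finite X" and "card X \<ge> 3" and "graph_on X E" and "x \<in> X"
    and "extensible (X - {x}) (derived X E x) t s sb"
  shows "\<forall>y\<in>X. extensible (X - {y}) (derived X E y) t s sb"
proof
  fix y assume "y \<in> X"
  have card_X: "card X = 2 + 2 * s + 2 * sb" and t: "int t = 2 * int s - int sb - 1"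
    using assms(1,4,5) unfolding extensible_def by auto
  have card_minus: "card (X - {v}) = 1 + 2 * s + 2 * sb" "card (X - {v}) + 1 + 2 * t = 6 * s"
    and insert_minus: "insert v (X - {v}) = X" if "v \<in> X" for v
    using card_X t that assms(1) by auto
  have "regular_two_graph (insert x (X - {x})) (derived X E x) (2 * s)"
    using strongly_regular_if_extensible(1)[OF assms(5)] card_minus(2)[OF assms(4)]
    by (rule regular_two_graph_insert_if_strongly_regular) simp
  then have "regular_two_graph X (derived X E x) (2 * s)"
    unfolding insert_minus[OF assms(4)] .
  then have "regular_two_graph X (derived X E y) (2 * s)"
    unfolding regular_two_graph_derived_iff[OF assms(3,4)] regular_two_graph_derived_iff[OF assms(3) \<open>y \<in> X\<close>] .
  then have "regular_two_graph (insert y (X - {y})) (derived X E y) (2 * s)"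
    unfolding insert_minus[OF \<open>y \<in> X\<close>] .
  then have "strongly_regular (X - {y}) (derived X E y) (2 * s) t s"
    by (intro strongly_regular_if_regular_two_graph_insert[where y = y] graph_on_derived card_minus)
      (simp_all add: assms(1,3) \<open>y \<in> X\<close>)
  then show "extensible (X - {y}) (derived X E y) t s sb"
    using card_minus(1)[OF \<open>y \<in> X\<close>] t strongly_regular_if_extensible(2)[OF assms(5)]
    by (rule extensible_if_strongly_regular)
qed

end
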